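(* Let $\Gamma\subset\mathbb{R}^2$ be a simple closed curve such that every set of $6$ points of $\Gamma$ is in c.s.c. position. Let $a\in\Gamma$ be a smooth point of $\Gamma$ with tangent line $\ell$, and let $b,c,d\in\Gamma$ be points such that $abcd$ is a non-degenerate parallelogram (with vertices in this cyclic order, so $c$ is opposite to $a$) whose sides are not parallel to $\ell$. Then the line through $c$ parallel to $\ell$ is a supporting line of $\Gamma$.
   Context: A set of points in $\mathbb{R}^2$ is in c.s.c. position if it is contained in the boundary of a centrally symmetric convex body. Under the hypothesis, $\Gamma$ is the boundary of a convex body, so at every point it has two one-sided tangent lines (the best linear approximations of $\Gamma$ at that point in the clockwise and counter-clockwise directions); a point is smooth if these coincide, and the common line is the tangent line there (equivalently, there is a unique supporting line of $\Gamma$ through that point). A supporting line of $\Gamma$ is a line meeting $\Gamma$ such that $\Gamma$ lies in one of the closed half-planes it determines. *)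

theory Defs
  imports "HOL-Analysis.Analysis"
begin

type_synonym pt = "real^2"

definition simple_closed_curve :: "pt set \<Rightarrow> bool" where
  "simple_closed_curve \<Gamma> \<longleftrightarrow>
     (\<exists>g. simple_path g \<and> pathfinish g = pathstart g \<and> path_image g = \<Gamma>)"

definition convex_body :: "pt set \<Rightarrow> bool" where
  "convex_body K \<longleftrightarrow> compact K \<and> convex K \<and> interior K \<noteq> {}"

definition centrally_symmetric :: "pt set \<Rightarrow> bool" where
  "centrally_symmetric K \<longleftrightarrow> (\<exists>p. \<forall>x\<in>K. 2 *\<^sub>R p - x \<in> K)"

definition csc_position :: "pt set \<Rightarrow> bool" where
  "csc_position S \<longleftrightarrow> (\<exists>K. convex_body K \<and> centrally_symmetric K \<and> S \<subseteq> frontier K)"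

definition is_line :: "pt set \<Rightarrow> bool" where
  "is_line L \<longleftrightarrow> (\<exists>u t. u \<noteq> 0 \<and> L = {x. inner u x = t})"

definition supporting_line :: "pt set \<Rightarrow> pt set \<Rightarrow> bool" where
  "supporting_line \<Gamma> L \<longleftrightarrow>
     (\<exists>u t. u \<noteq> 0 \<and> L = {x. inner u x = t} \<and> L \<inter> \<Gamma> \<noteq> {} \<and>
        ((\<forall>x\<in>\<Gamma>. inner u x \<le> t) \<or> (\<forall>x\<in>\<Gamma>. inner u x \<ge> t)))"

definition smooth_point_tangent :: "pt set \<Rightarrow> pt \<Rightarrow> pt set \<Rightarrow> bool" where
  "smooth_point_tangent \<Gamma> a L \<longleftrightarrow>
     a \<in> \<Gamma> \<and> a \<in> L \<and> supporting_line \<Gamma> L \<and>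
     (\<forall>L'. supporting_line \<Gamma> L' \<and> a \<in> L' \<longrightarrow> L' = L)"

end

theory Submission
  imports Defs
begin

text \<open>Let \<open>\<Gamma>\<close> lie below its tangent \<open>l = {x. u \<bullet> x = t}\<close> at \<open>a\<close>; we show \<open>u \<bullet> c \<le> u \<bullet> x\<close> for
  all \<open>x \<in> \<Gamma>\<close>. In the affine frame \<open>a, e = b - a, f = d - a\<close>, a point \<open>x\<close> strictly below the
  parallel to \<open>l\<close> through \<open>c\<close> has a coordinate larger than \<open>1\<close>, say along \<open>e\<close>. Since \<open>a\<close> is
  smooth, every other line through \<open>a\<close> is crossed by \<open>\<Gamma>\<close>; a line whose direction lies between
  the tangent and \<open>x - c\<close> provides a sixth point \<open>y\<close>. But \<open>a, b, c, d, x, y\<close> cannot lie on the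
  boundary of a centrally symmetric convex body: the supporting lines at the four vertices,
  tested against the points and their reflections in the centre, give an infeasible system of
  linear inequalities.\<close>

lemma det2_nonzero_if_not_collinear:
  fixes e f :: "real^2"
  assumes "\<not> collinear {0, e, f}"
  shows "e$1 * f$2 - e$2 * f$1 \<noteq> 0"
proof
  assume det: "e$1 * f$2 - e$2 * f$1 = 0"
  have "e \<noteq> 0" using assms collinear_lemma by blast
  then consider "e$1 \<noteq> 0" | "e$2 \<noteq> 0" by (auto simp: vec_eq_iff forall_2)
  then have "\<exists>c. f = c *\<^sub>R e"
  proof cases
    case 1
    with det have "f = (f$1 / e$1) *\<^sub>R e" by (auto simp: vec_eq_iff forall_2 field_simps)
    then show ?thesis ..
  next
    case 2
    with det have "f = (f$2 / e$2) *\<^sub>R e" by (auto simp: vec_eq_iff forall_2 field_simps)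
    then show ?thesis ..
  qed
  then show False using assms collinear_lemma by blast
qed

lemma dual_basis_2:
  fixes e f :: "real^2"
  assumes "\<not> collinear {0, e, f}"
  obtains es fs where "es \<bullet> e = 1" "es \<bullet> f = 0" "fs \<bullet> e = 0" "fs \<bullet> f = 1"
    "\<And>w. w = (es \<bullet> w) *\<^sub>R e + (fs \<bullet> w) *\<^sub>R f"
proof
  define D where "D = e$1 * f$2 - e$2 * f$1"
  have D: "D \<noteq> 0" unfolding D_def by (rule det2_nonzero_if_not_collinear[OF assms])
  define es :: "real^2" where "es = vector [f$2 / D, - f$1 / D]"
  define fs :: "real^2" where "fs = vector [- e$2 / D, e$1 / D]"
  have es: "es \<bullet> w = (f$2 * w$1 - f$1 * w$2) / D" and fs: "fs \<bullet> w = (e$1 * w$2 - e$2 * w$1) / D" for w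
    unfolding es_def fs_def by (simp_all add: inner_vec_def sum_2 diff_divide_distrib mult.commute)
  show "es \<bullet> e = 1" "es \<bullet> f = 0" "fs \<bullet> e = 0" "fs \<bullet> f = 1"
    using D by (simp_all add: es fs D_def mult.commute)
  show "w = (es \<bullet> w) *\<^sub>R e + (fs \<bullet> w) *\<^sub>R f" for w
  proof -
    have "(f$2 * w$1 - f$1 * w$2) * e$i + (e$1 * w$2 - e$2 * w$1) * f$i = D * w$i" if "i = 1 \<or> i = 2" for i
      using that unfolding D_def by (auto simp: algebra_simps)
    then show ?thesis
      using D by (simp add: es fs vec_eq_iff forall_2 add_divide_distrib[symmetric])
  qed
qed

lemma inner_basis_nonzero:
  fixes e f v :: "real^2"
  assumes "\<not> collinear {0, e, f}" "v \<noteq> 0"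
  shows "(v \<bullet> e, v \<bullet> f) \<noteq> (0, 0)"
proof
  obtain es fs where coords: "\<And>w. w = (es \<bullet> w) *\<^sub>R e + (fs \<bullet> w) *\<^sub>R f"
    using dual_basis_2[OF assms(1)] by blast
  assume "(v \<bullet> e, v \<bullet> f) = (0, 0)"
  moreover have "v \<bullet> v = v \<bullet> ((es \<bullet> v) *\<^sub>R e + (fs \<bullet> v) *\<^sub>R f)" by (metis coords)
  ultimately have "v \<bullet> v = 0" by (simp add: inner_add_right)
  then show False using assms(2) by simp
qed

lemma affine_coords_inj:
  fixes e f :: "real^2"
  assumes "\<not> collinear {0, e, f}"
  shows "inj (\<lambda>(s, t). a + s *\<^sub>R e + t *\<^sub>R f)"
proof -
  obtain es fs where "es \<bullet> e = 1" "es \<bullet> f = 0" "fs \<bullet> e = 0" "fs \<bullet> f = 1"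
    using dual_basis_2[OF assms] .
  then have "es \<bullet> (p - a) = s" "fs \<bullet> (p - a) = t" if "p = a + s *\<^sub>R e + t *\<^sub>R f" for p s t
    using that by (simp_all add: inner_add_right)
  then show ?thesis
    by (intro injI) (clarsimp, metis)
qed

lemma card_parallelogram_two_points:
  fixes a e f :: pt
  assumes "\<not> collinear {0, e, f}" "lx > 1" "ly > 0" "my < 0" "(lx, mx) \<noteq> (ly, my)"
  shows "card {a, a + e, a + e + f, a + f, a + lx *\<^sub>R e + mx *\<^sub>R f, a + ly *\<^sub>R e + my *\<^sub>R f} = 6"
proof -
  let ?P = "\<lambda>(s, t). a + s *\<^sub>R e + t *\<^sub>R f"
  have "{a, a + e, a + e + f, a + f, a + lx *\<^sub>R e + mx *\<^sub>R f, a + ly *\<^sub>R e + my *\<^sub>R f}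
      = ?P ` {(0, 0), (1, 0), (1, 1), (0, 1), (lx, mx), (ly, my)}"
    by (simp add: add.assoc)
  moreover have "card {(0::real, 0::real), (1, 0), (1, 1), (0, 1), (lx, mx), (ly, my)} = 6"
    using assms(2-5) by (simp add: prod_eq_iff)
  moreover have "inj_on ?P X" for X
    using affine_coords_inj[OF assms(1)] by (rule inj_on_subset) simp
  ultimately show ?thesis
    by (simp only: card_image)
qed

lemma convex_body_frontier_support:
  assumes "convex_body K" "x \<in> frontier K"
  obtains v where "v \<noteq> 0" "\<forall>k\<in>K. v \<bullet> k \<le> v \<bullet> x"
proof -
  have "convex K" and "rel_interior K = interior K"
    using assms(1) rel_interior_nonempty_interior unfolding convex_body_def by auto
  moreover have "x \<in> closure K" "x \<notin> interior K" using assms(2) by (auto simp: frontier_def)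
  ultimately obtain w where "w \<noteq> 0" "\<And>y. y \<in> closure K \<Longrightarrow> w \<bullet> x \<le> w \<bullet> y"
    using supporting_hyperplane_relative_frontier by metis
  then show ?thesis
    using that[of "- w"] closure_subset by auto
qed

lemma supporting_line_outer_normal:
  assumes "supporting_line \<Gamma> L"
  obtains u t where "u \<noteq> 0" "L = {x. u \<bullet> x = t}" "\<forall>x\<in>\<Gamma>. u \<bullet> x \<le> t"
proof -
  obtain u t where u: "u \<noteq> 0" "L = {x. u \<bullet> x = t}"
    and side: "(\<forall>x\<in>\<Gamma>. u \<bullet> x \<le> t) \<or> (\<forall>x\<in>\<Gamma>. u \<bullet> x \<ge> t)"
    using assms unfolding supporting_line_def by blast
  from side show ?thesis
  proof
    assume "\<forall>x\<in>\<Gamma>. u \<bullet> x \<ge> t"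
    then show ?thesis using that[of "- u" "- t"] u by auto
  qed (use that u in blast)
qed

lemma smooth_point_line_crosses:
  assumes smooth: "smooth_point_tangent \<Gamma> a l" and "n \<noteq> 0" "w \<in> l" "n \<bullet> w \<noteq> n \<bullet> a"
  obtains y where "y \<in> \<Gamma>" "n \<bullet> a < n \<bullet> y"
proof -
  have "\<exists>y\<in>\<Gamma>. n \<bullet> a < n \<bullet> y"
  proof (rule ccontr)
    assume "\<not> (\<exists>y\<in>\<Gamma>. n \<bullet> a < n \<bullet> y)"
    moreover have "a \<in> \<Gamma> \<inter> {x. n \<bullet> x = n \<bullet> a}"
      using smooth unfolding smooth_point_tangent_def by simp
    ultimately have "supporting_line \<Gamma> {x. n \<bullet> x = n \<bullet> a}"
      using \<open>n \<noteq> 0\<close> unfolding supporting_line_def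
      by (intro exI[of _ n] exI[of _ "n \<bullet> a"]) (auto simp: not_less)
    then have "{x. n \<bullet> x = n \<bullet> a} = l"
      using smooth unfolding smooth_point_tangent_def by simp
    then show False using assms(3,4) by blast
  qed
  then show ?thesis using that by blast
qed

lemma translate_hyperplane:
  fixes u v :: "'a::real_inner"
  shows "(\<lambda>x. x + v) ` {x. u \<bullet> x = t} = {x. u \<bullet> x = t + u \<bullet> v}"
proof (intro set_eqI iffI)
  fix x assume "x \<in> {x. u \<bullet> x = t + u \<bullet> v}"
  then have "x - v \<in> {x. u \<bullet> x = t}" by (simp add: inner_diff_right)
  then show "x \<in> (\<lambda>x. x + v) ` {x. u \<bullet> x = t}" by (rule rev_image_eqI) simp
qed (auto simp: inner_add_right)

lemma nonneg_combination_pos: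
  fixes P Q \<alpha> \<beta> :: real
  assumes "0 \<le> P" "0 \<le> Q" "(P, Q) \<noteq> (0, 0)" "0 < \<alpha>" "0 < \<beta>"
  shows "0 < \<alpha> * P + \<beta> * Q"
  using assms by (smt (verit) mult_nonneg_nonneg mult_pos_pos prod.inject)

text \<open>Here \<open>(al, be)\<close> are the coordinates of \<open>2 p - a - c\<close> for the centre \<open>p\<close> of the body, and
  \<open>(P\<^sub>v, Q\<^sub>v)\<close> those of an outer normal at the vertex \<open>v\<close>, evaluated on \<open>e\<close> and \<open>f\<close>.\<close>
lemma parallelogram_support_inequalities_inconsistent:
  fixes al be lx mx ly my Pa Qa Pb Qb Pc Qc Pd Qd :: real
  assumes x: "lx > 1" and y: "ly > 0" "my < 0" "my * (lx - 1) + (1 - mx) * ly < 0"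
    and a: "(Pa, Qa) \<noteq> (0, 0)" "Pa \<le> 0" "Qa \<le> 0"
      "(1 + al - lx) * Pa + (1 + be - mx) * Qa \<le> 0" "ly * Pa + my * Qa \<le> 0"
    and b: "(Pb, Qb) \<noteq> (0, 0)" "Pb \<ge> 0" "Qb \<le> 0" "al * Pb + be * Qb \<le> 0"
    and c: "(Pc, Qc) \<noteq> (0, 0)" "Pc \<ge> 0" "Qc \<ge> 0" "al * Pc + be * Qc \<le> 0"
      "(lx - 1) * Pc + (mx - 1) * Qc \<le> 0" "(al - ly) * Pc + (be - my) * Qc \<le> 0"
    and d: "(Pd, Qd) \<noteq> (0, 0)" "Pd \<le> 0" "Qd \<ge> 0" "al * Pd + be * Qd \<le> 0"
  shows False
proof -
  consider "al \<le> 0" "be \<le> 0" | "al > 0" "be > 0" | "al > 0" "be < 0" | "al < 0" "be > 0"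
    | "al = 0" "be > 0" | "al > 0" "be = 0"
    by fastforce
  then show False
  proof cases
    case 1
    then have "0 \<le> al * Pa" "0 \<le> be * Qa" using a by (simp_all add: mult_nonpos_nonpos)
    then have xa: "(1 - lx) * Pa + (1 - mx) * Qa \<le> 0" using a(4) by (simp add: algebra_simps)
    show False
    proof (cases "Qa = 0")
      case True
      then show False using xa x a(1,2) by (simp add: mult_le_0_iff)
    next
      case False
      then have "Qa < 0" using a(3) by simp
      have "ly * ((1 - lx) * Pa + (1 - mx) * Qa) + (lx - 1) * (ly * Pa + my * Qa) \<le> 0"
        using xa a(5) x y(1) by (simp add: add_nonpos_nonpos mult_nonneg_nonpos)
      then have "(my * (lx - 1) + (1 - mx) * ly) * Qa \<le> 0" by (simp add: algebra_simps)
      then show False using \<open>Qa < 0\<close> y(3) by (simp add: mult_le_0_iff)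
    qed
  next
    case 2
    then show False using nonneg_combination_pos[of Pc Qc al be] c by simp
  next
    case 3
    then show False using nonneg_combination_pos[of Pb "- Qb" al "- be"] b by simp
  next
    case 4
    then show False using nonneg_combination_pos[of "- Pd" Qd "- al" be] d by simp
  next
    case 5
    then have "Qc = 0" using c(3,4) by (simp add: mult_le_0_iff)
    then show False using c(1,2,5) x by (simp add: mult_le_0_iff)
  next
    case 6
    then have "Pc = 0" using c(2,4) by (simp add: mult_le_0_iff)
    then show False using 6 c(1,3,6) y(2) by (simp add: zero_le_mult_iff)
  qed
qed

lemma parallelogram_two_points_not_csc:
  fixes a e f :: pt
  assumes ef: "\<not> collinear {0, e, f}"
    and x: "lx > 1" and y: "ly > 0" "my < 0" "my * (lx - 1) + (1 - mx) * ly < 0"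
  shows "\<not> csc_position {a, a + e, a + e + f, a + f, a + lx *\<^sub>R e + mx *\<^sub>R f, a + ly *\<^sub>R e + my *\<^sub>R f}"
    (is "\<not> csc_position {a, ?b, ?c, ?d, ?x, ?y}")
proof
  assume "csc_position {a, ?b, ?c, ?d, ?x, ?y}"
  then obtain K p where K: "convex_body K" and sym: "\<forall>k\<in>K. 2 *\<^sub>R p - k \<in> K"
    and on: "{a, ?b, ?c, ?d, ?x, ?y} \<subseteq> frontier K"
    unfolding csc_position_def centrally_symmetric_def by blast
  have "frontier K \<subseteq> K"
    using K by (simp add: convex_body_def compact_imp_closed frontier_subset_closed)
  then have inK: "a \<in> K" "?b \<in> K" "?c \<in> K" "?d \<in> K" "?x \<in> K" "?y \<in> K"
    using on by auto
  then have refl: "2 *\<^sub>R p - a \<in> K" "2 *\<^sub>R p - ?b \<in> K" "2 *\<^sub>R p - ?c \<in> K" "2 *\<^sub>R p - ?d \<in> K"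
    "2 *\<^sub>R p - ?x \<in> K" "2 *\<^sub>R p - ?y \<in> K"
    using sym by auto
  obtain es fs where coords: "\<And>w. w = (es \<bullet> w) *\<^sub>R e + (fs \<bullet> w) *\<^sub>R f"
    using dual_basis_2[OF ef] by blast
  define al where "al = es \<bullet> (2 *\<^sub>R p - 2 *\<^sub>R a) - 1"
  define be where "be = fs \<bullet> (2 *\<^sub>R p - 2 *\<^sub>R a) - 1"
  have center: "2 *\<^sub>R p = 2 *\<^sub>R a + (1 + al) *\<^sub>R e + (1 + be) *\<^sub>R f"
    using coords[of "2 *\<^sub>R p - 2 *\<^sub>R a"] unfolding al_def be_def by (simp add: algebra_simps)
  obtain va vb vc vd where va: "va \<noteq> 0" "\<forall>k\<in>K. va \<bullet> k \<le> va \<bullet> a"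
    and vb: "vb \<noteq> 0" "\<forall>k\<in>K. vb \<bullet> k \<le> vb \<bullet> ?b"
    and vc: "vc \<noteq> 0" "\<forall>k\<in>K. vc \<bullet> k \<le> vc \<bullet> ?c"
    and vd: "vd \<noteq> 0" "\<forall>k\<in>K. vd \<bullet> k \<le> vd \<bullet> ?d"
    using convex_body_frontier_support[OF K] on by (metis insert_subset)
  note inner_simps = inner_add_right inner_diff_right inner_scaleR_right center
  have "va \<bullet> e \<le> 0" "va \<bullet> f \<le> 0" "(1 + al - lx) * (va \<bullet> e) + (1 + be - mx) * (va \<bullet> f) \<le> 0"
    "ly * (va \<bullet> e) + my * (va \<bullet> f) \<le> 0"
    using va(2) inK refl by (auto simp: inner_simps algebra_simps)
  moreover have "vb \<bullet> e \<ge> 0" "vb \<bullet> f \<le> 0" "al * (vb \<bullet> e) + be * (vb \<bullet> f) \<le> 0"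
    using vb(2) inK refl by (auto simp: inner_simps algebra_simps)
  moreover have "vc \<bullet> e \<ge> 0" "vc \<bullet> f \<ge> 0" "al * (vc \<bullet> e) + be * (vc \<bullet> f) \<le> 0"
    "(lx - 1) * (vc \<bullet> e) + (mx - 1) * (vc \<bullet> f) \<le> 0" "(al - ly) * (vc \<bullet> e) + (be - my) * (vc \<bullet> f) \<le> 0"
    using vc(2) inK refl by (auto simp: inner_simps algebra_simps)
  moreover have "vd \<bullet> e \<le> 0" "vd \<bullet> f \<ge> 0" "al * (vd \<bullet> e) + be * (vd \<bullet> f) \<le> 0"
    using vd(2) inK refl by (auto simp: inner_simps algebra_simps)
  ultimately show False
    using parallelogram_support_inequalities_inconsistent[OF x y] inner_basis_nonzero[OF ef] va(1) vb(1) vc(1) vd(1) by blast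
qed

lemma smooth_point_beyond_line:
  fixes a e f :: pt
  assumes smooth: "smooth_point_tangent \<Gamma> a l" and l: "l = {x. u \<bullet> x = t}"
    and ef: "\<not> collinear {0, e, f}" and steeper: "u \<bullet> e < k * (u \<bullet> f)"
  obtains ly my where "a + ly *\<^sub>R e + my *\<^sub>R f \<in> \<Gamma>" "my < - k * ly"
proof -
  obtain es fs where "es \<bullet> e = 1" "es \<bullet> f = 0" "fs \<bullet> e = 0" "fs \<bullet> f = 1"
    and coords: "\<And>w. w = (es \<bullet> w) *\<^sub>R e + (fs \<bullet> w) *\<^sub>R f"
    using dual_basis_2[OF ef] by blast
  define n where "n = - (k *\<^sub>R es + fs)"
  have n: "n \<bullet> e = - k" "n \<bullet> f = - 1"
    unfolding n_def using \<open>es \<bullet> e = 1\<close> \<open>es \<bullet> f = 0\<close> \<open>fs \<bullet> e = 0\<close> \<open>fs \<bullet> f = 1\<close>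
    by (simp_all add: inner_diff_left)
  have "u \<bullet> a = t" using smooth l unfolding smooth_point_tangent_def by simp
  then have "a + (u \<bullet> f) *\<^sub>R e - (u \<bullet> e) *\<^sub>R f \<in> l"
    using l by (simp add: inner_add_right inner_diff_right)
  moreover have "n \<bullet> (a + (u \<bullet> f) *\<^sub>R e - (u \<bullet> e) *\<^sub>R f) \<noteq> n \<bullet> a"
    using n steeper by (simp add: inner_add_right inner_diff_right mult.commute)
  moreover have "n \<noteq> 0" using n by auto
  ultimately obtain y where y: "y \<in> \<Gamma>" "n \<bullet> a < n \<bullet> y"
    using smooth_point_line_crosses[OF smooth] by blast
  define ly my where "ly = es \<bullet> (y - a)" and "my = fs \<bullet> (y - a)"
  have y_eq: "y = a + ly *\<^sub>R e + my *\<^sub>R f"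
    using coords[of "y - a"] unfolding ly_def my_def by (simp add: algebra_simps)
  have "my < - k * ly"
    using y(2) n by (subst (asm) y_eq) (simp add: inner_add_right mult.commute)
  then show ?thesis using that y(1) y_eq by blast
qed

lemma csc6_beyond_side_not_below_opposite_vertex:
  fixes \<Gamma> :: "pt set" and a e f :: pt
  assumes csc6: "\<forall>S. S \<subseteq> \<Gamma> \<and> finite S \<and> card S = 6 \<longrightarrow> csc_position S"
    and smooth: "smooth_point_tangent \<Gamma> a l" and l: "l = {x. u \<bullet> x = t}" "\<forall>x\<in>\<Gamma>. u \<bullet> x \<le> t"
    and ef: "\<not> collinear {0, e, f}"
    and vertices: "a + e \<in> \<Gamma>" "a + e + f \<in> \<Gamma>" "a + f \<in> \<Gamma>"
    and slopes: "u \<bullet> e < 0" "u \<bullet> f < 0"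
    and x: "a + lx *\<^sub>R e + mx *\<^sub>R f \<in> \<Gamma>" "lx > 1"
  shows "u \<bullet> (a + e + f) \<le> u \<bullet> (a + lx *\<^sub>R e + mx *\<^sub>R f)"
proof (rule ccontr)
  define E F where "E = - (u \<bullet> e)" and "F = - (u \<bullet> f)"
  have "E > 0" "F > 0" using slopes by (simp_all add: E_def F_def)
  assume "\<not> ?thesis"
  then have "(1 - mx) * F < E * (lx - 1)"
    by (simp add: E_def F_def inner_add_right algebra_simps)
  then have "(1 - mx) / (lx - 1) < E / F" using x(2) \<open>F > 0\<close> by (simp add: field_simps)
  moreover have "0 < E / F" using \<open>E > 0\<close> \<open>F > 0\<close> by simp
  \<comment> \<open>The direction \<open>e - k f\<close> lies strictly between that of \<open>x - c\<close> and that of the tangent.\<close>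
  ultimately obtain k where "0 < k" "(1 - mx) / (lx - 1) < k" "k < E / F"
    using dense[of "max 0 ((1 - mx) / (lx - 1))" "E / F"] by auto
  then have k: "0 < k" "1 - mx < k * (lx - 1)" "k * F < E"
    using x(2) \<open>F > 0\<close> by (simp_all add: field_simps)
  then obtain ly my where y: "a + ly *\<^sub>R e + my *\<^sub>R f \<in> \<Gamma>" and my: "my < - k * ly"
    using smooth_point_beyond_line[OF smooth l(1) ef, of k] by (auto simp: E_def F_def)
  have "u \<bullet> a = t" using smooth l(1) unfolding smooth_point_tangent_def by simp
  then have "0 \<le> ly * E + my * F"
    using l(2) y by (force simp: E_def F_def inner_add_right)
  moreover have "F * my < F * (- k * ly)"
    using mult_strict_left_mono[OF my \<open>F > 0\<close>] .
  ultimately have "0 < (E - k * F) * ly" by (simp add: algebra_simps)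
  then have "ly > 0" using k(3) by (simp add: zero_less_mult_iff)
  have "my < 0" using my mult_pos_pos[OF k(1) \<open>ly > 0\<close>] by linarith
  have "my * (lx - 1) < - k * ly * (lx - 1)"
    using mult_strict_right_mono[OF my] x(2) by simp
  moreover have "(1 - mx) * ly < k * (lx - 1) * ly"
    using mult_strict_right_mono[OF k(2) \<open>ly > 0\<close>] .
  ultimately have y3: "my * (lx - 1) + (1 - mx) * ly < 0" by (simp add: algebra_simps)
  let ?S = "{a, a + e, a + e + f, a + f, a + lx *\<^sub>R e + mx *\<^sub>R f, a + ly *\<^sub>R e + my *\<^sub>R f}"
  have "(lx, mx) \<noteq> (ly, my)"
  proof
    assume "(lx, mx) = (ly, my)"
    then have "my * (lx - 1) + (1 - mx) * ly = ly - my" by (simp add: algebra_simps)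
    then show False using y3 \<open>ly > 0\<close> \<open>my < 0\<close> by linarith
  qed
  then have "card ?S = 6"
    using card_parallelogram_two_points[OF ef x(2) \<open>ly > 0\<close> \<open>my < 0\<close>] by blast
  moreover have "?S \<subseteq> \<Gamma>"
    using smooth vertices x(1) y unfolding smooth_point_tangent_def by auto
  ultimately have "csc_position ?S"
    using csc6 by blast
  then show False
    using parallelogram_two_points_not_csc[OF ef x(2) \<open>ly > 0\<close> \<open>my < 0\<close> y3] by blast
qed

lemma csc6_opposite_vertex_below:
  fixes \<Gamma> :: "pt set" and a e f :: pt
  assumes csc6: "\<forall>S. S \<subseteq> \<Gamma> \<and> finite S \<and> card S = 6 \<longrightarrow> csc_position S"
    and smooth: "smooth_point_tangent \<Gamma> a l" and l: "l = {x. u \<bullet> x = t}" "\<forall>x\<in>\<Gamma>. u \<bullet> x \<le> t"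
    and ef: "\<not> collinear {0, e, f}"
    and vertices: "a + e \<in> \<Gamma>" "a + e + f \<in> \<Gamma>" "a + f \<in> \<Gamma>"
    and slopes: "u \<bullet> e < 0" "u \<bullet> f < 0"
    and "x \<in> \<Gamma>"
  shows "u \<bullet> (a + e + f) \<le> u \<bullet> x"
proof -
  obtain es fs where coords: "\<And>w. w = (es \<bullet> w) *\<^sub>R e + (fs \<bullet> w) *\<^sub>R f"
    using dual_basis_2[OF ef] by blast
  define lx mx where "lx = es \<bullet> (x - a)" and "mx = fs \<bullet> (x - a)"
  have x: "x = a + lx *\<^sub>R e + mx *\<^sub>R f"
    using coords[of "x - a"] unfolding lx_def mx_def by (simp add: algebra_simps)
  consider "lx \<le> 1" "mx \<le> 1" | "lx > 1" | "mx > 1" by linarith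
  then show ?thesis
  proof cases
    case 1
    then have "1 * (u \<bullet> e) \<le> lx * (u \<bullet> e)" "1 * (u \<bullet> f) \<le> mx * (u \<bullet> f)"
      using slopes by (simp_all add: mult_right_mono_neg)
    then show ?thesis by (simp add: x inner_add_right)
  next
    case 2
    then show ?thesis
      using csc6_beyond_side_not_below_opposite_vertex[OF csc6 smooth l ef vertices slopes] \<open>x \<in> \<Gamma>\<close> x
      by blast
  next
    case 3
    have "\<not> collinear {0, f, e}" using ef by (simp add: insert_commute)
    moreover have "a + f + e \<in> \<Gamma>" "x = a + mx *\<^sub>R f + lx *\<^sub>R e"
      using vertices(2) x by (simp_all add: algebra_simps)
    ultimately have "u \<bullet> (a + f + e) \<le> u \<bullet> x"
      using csc6_beyond_side_not_below_opposite_vertex[OF csc6 smooth l _ vertices(3) _ vertices(1) slopes(2,1)]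
        \<open>x \<in> \<Gamma>\<close> 3 by blast
    then show ?thesis by (simp add: add_ac)
  qed
qed

theorem mainTheorem9:
  fixes \<Gamma> :: "pt set" and a b c d :: pt and l :: "pt set"
  assumes "simple_closed_curve \<Gamma>"
    and "\<forall>S. S \<subseteq> \<Gamma> \<and> finite S \<and> card S = 6 \<longrightarrow> csc_position S"
    and "smooth_point_tangent \<Gamma> a l"
    and "b \<in> \<Gamma>" "c \<in> \<Gamma>" "d \<in> \<Gamma>"
    and "a + c = b + d"
    and "\<not> collinear {a, b, d}"
    and "b \<notin> l" "d \<notin> l"
  shows "supporting_line \<Gamma> ((\<lambda>x. x + (c - a)) ` l)"
proof -
  have "a \<in> \<Gamma>" "a \<in> l" "supporting_line \<Gamma> l"
    using assms(3) unfolding smooth_point_tangent_def by auto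
  then obtain u t where u: "u \<noteq> 0" "l = {x. u \<bullet> x = t}" "\<forall>x\<in>\<Gamma>. u \<bullet> x \<le> t"
    using supporting_line_outer_normal by blast
  have "u \<bullet> a = t" using \<open>a \<in> l\<close> u(2) by simp
  define e f where "e = b - a" and "f = d - a"
  have "c = a + e + f"
    unfolding e_def f_def by (simp add: algebra_simps flip: assms(7))
  then have vertices: "a + e \<in> \<Gamma>" "a + e + f \<in> \<Gamma>" "a + f \<in> \<Gamma>"
    using assms(4-6) unfolding e_def f_def by simp_all
  have "u \<bullet> b < t" "u \<bullet> d < t"
    using u(2,3) assms(4,6,9,10) by (simp_all add: order.strict_iff_order)
  then have slopes: "u \<bullet> e < 0" "u \<bullet> f < 0"
    using \<open>u \<bullet> a = t\<close> unfolding e_def f_def by (simp_all add: inner_diff_right)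
  have "\<not> collinear {0, e, f}"
    using assms(8) collinear_3[of b a d] unfolding e_def f_def by (simp add: insert_commute)
  then have "\<forall>x\<in>\<Gamma>. u \<bullet> c \<le> u \<bullet> x"
    unfolding \<open>c = a + e + f\<close> using csc6_opposite_vertex_below[OF assms(2,3) u(2,3) _ vertices slopes] by blast
  moreover have "(\<lambda>x. x + (c - a)) ` l = {x. u \<bullet> x = u \<bullet> c}"
    using \<open>u \<bullet> a = t\<close> unfolding u(2) translate_hyperplane by (simp add: inner_diff_right)
  ultimately show ?thesis
    unfolding supporting_line_def using u(1) assms(5)
    by (intro exI[of _ u] exI[of _ "u \<bullet> c"]) auto
qed

end
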